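(* Assume the setting of the context (two temperatures). For every $\gamma\in\mathcal{P}(S^2)$, $I_1(\gamma)=I^\infty(\gamma)$.
   Context: **Dynamics.** $S$ is a finite set. For $k=1,2$, $\Gamma^k$ is an irreducible intensity matrix on $S$, reversible with respect to its unique invariant distribution $\mu_k$. Set $q_k(x)=\sum_{y\ne x}\Gamma^k_{x,y}$ and $\mu=\mu_1\times\mu_2$ on $S^2$. **Weights and infinite swapping rates.** - $\rho(x_1,x_2)=\mu(x_1,x_2)/(\mu(x_1,x_2)+\mu(x_2,x_1))$. - The infinite swapping rates are $\Gamma^\infty_{(x_1,x_2),(y_1,x_2)}=\rho(x_1,x_2)\Gamma^1_{x_1,y_1}+\rho(x_2,x_1)\Gamma^2_{x_1,y_1}$ for $y_1\ne x_1$. - They are $\Gamma^\infty_{(x_1,x_2),(x_1,y_2)}=\rho(x_1,x_2)\Gamma^2_{x_2,y_2}+\rho(x_2,x_1)\Gamma^1_{x_2,y_2}$ for $y_2\ne x_2$. - All other off-diagonal rates are $0$. - $q^\infty(\mathbf{x})=\sum_{\mathbf{y}\ne\mathbf{x}}\Gamma^\infty_{\mathbf{x},\mathbf{y}}$. - $\bar\mu(x_1,x_2)=\frac12[\mu(x_1,x_2)+\mu(x_2,x_1)]$. **Map and rate functions.** - $(M\nu)(x_1,x_2)=\rho(x_1,x_2)[\nu(x_1,x_2)+\nu(x_2,x_1)]$. - For $\nu\in\mathcal{P}(S^2)$ with $\theta=\nu/\bar\mu$, $J(\nu)=\sum_{\mathbf{x}}q^\infty(\mathbf{x})\theta(\mathbf{x})\bar\mu(\mathbf{x})-\sum_{\mathbf{x}\ne\mathbf{y}}\theta^{1/2}(\mathbf{x})\theta^{1/2}(\mathbf{y})\Gamma^\infty_{\mathbf{x},\mathbf{y}}\bar\mu(\mathbf{x})$.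 - $I_1(\gamma)=\inf\{J(\nu):\nu\in\mathcal{P}(S^2),\ M\nu=\gamma\}$, with $\inf\emptyset=+\infty$. **Uncoupled generator.** $\Gamma$ is the rate matrix of the uncoupled process on $S^2$: $\Gamma_{(x_1,x_2),(y_1,x_2)}=\Gamma^1_{x_1,y_1}$ for $y_1\ne x_1$, and $\Gamma_{(x_1,x_2),(x_1,y_2)}=\Gamma^2_{x_2,y_2}$ for $y_2\ne x_2$. All other off-diagonal entries are $0$, and $q(x_1,x_2)=q_1(x_1)+q_2(x_2)$. **Definition of $I^\infty$.** For $\gamma\in\mathcal{P}(S^2)$ with $f=\gamma/\mu$ satisfying $f(x_1,x_2)=f(x_2,x_1)$ for all $(x_1,x_2)$, set \[ I^\infty(\gamma)=\sum_{\mathbf{x}}q(\mathbf{x})\gamma(\mathbf{x})-\sum_{\mathbf{x}\ne\mathbf{y}}f^{1/2}(\mathbf{x})f^{1/2}(\mathbf{y})\Gamma_{\mathbf{x},\mathbf{y}}\mu(\mathbf{x}). \] Otherwise set $I^\infty(\gamma)=+\infty$. *)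

theory Defs
  imports "HOL-Analysis.Analysis" "HOL-Library.Extended_Real"
begin

definition pdist :: "('b::finite \<Rightarrow> real) \<Rightarrow> bool" where
  "pdist \<nu> \<longleftrightarrow> (\<forall>x. \<nu> x \<ge> 0) \<and> sum \<nu> UNIV = 1"

definition intensity_matrix :: "('a::finite \<Rightarrow> 'a \<Rightarrow> real) \<Rightarrow> bool" where
  "intensity_matrix G \<longleftrightarrow> (\<forall>x y. x \<noteq> y \<longrightarrow> G x y \<ge> 0) \<and> (\<forall>x. (\<Sum>y\<in>UNIV. G x y) = 0)"

definition irreducible_rates :: "('a::finite \<Rightarrow> 'a \<Rightarrow> real) \<Rightarrow> bool" where
  "irreducible_rates G \<longleftrightarrow> (\<forall>x y. (x, y) \<in> {(a, b). a \<noteq> b \<and> G a b > 0}\<^sup>*)"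

definition invariant_dist :: "('a::finite \<Rightarrow> 'a \<Rightarrow> real) \<Rightarrow> ('a \<Rightarrow> real) \<Rightarrow> bool" where
  "invariant_dist G m \<longleftrightarrow> pdist m \<and> (\<forall>y. (\<Sum>x\<in>UNIV. m x * G x y) = 0)"

definition reversible :: "('a::finite \<Rightarrow> 'a \<Rightarrow> real) \<Rightarrow> ('a \<Rightarrow> real) \<Rightarrow> bool" where
  "reversible G m \<longleftrightarrow> (\<forall>x y. m x * G x y = m y * G y x)"

definition qrate :: "('b::finite \<Rightarrow> 'b \<Rightarrow> real) \<Rightarrow> 'b \<Rightarrow> real" where
  "qrate G x = (\<Sum>y\<in>UNIV - {x}. G x y)"

definition prodm :: "('a \<Rightarrow> real) \<Rightarrow> ('a \<Rightarrow> real) \<Rightarrow> 'a \<times> 'a \<Rightarrow> real" where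
  "prodm m1 m2 = (\<lambda>(x1, x2). m1 x1 * m2 x2)"

definition swp :: "'a \<times> 'a \<Rightarrow> 'a \<times> 'a" where
  "swp = (\<lambda>(x1, x2). (x2, x1))"

definition rho :: "('a \<times> 'a \<Rightarrow> real) \<Rightarrow> 'a \<times> 'a \<Rightarrow> real" where
  "rho m x = m x / (m x + m (swp x))"

definition mubar :: "('a \<times> 'a \<Rightarrow> real) \<Rightarrow> 'a \<times> 'a \<Rightarrow> real" where
  "mubar m x = (m x + m (swp x)) / 2"

text \<open>Infinite swapping rates (only off-diagonal entries are used; the diagonal is set to 0).\<close>
definition Gamma_inf :: "('a \<Rightarrow> 'a \<Rightarrow> real) \<Rightarrow> ('a \<Rightarrow> 'a \<Rightarrow> real) \<Rightarrow> ('a \<times> 'a \<Rightarrow> real)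
    \<Rightarrow> 'a \<times> 'a \<Rightarrow> 'a \<times> 'a \<Rightarrow> real" where
  "Gamma_inf G1 G2 m x y =
     (if snd y = snd x \<and> fst y \<noteq> fst x then
        rho m x * G1 (fst x) (fst y) + rho m (swp x) * G2 (fst x) (fst y)
      else if fst y = fst x \<and> snd y \<noteq> snd x then
        rho m x * G2 (snd x) (snd y) + rho m (swp x) * G1 (snd x) (snd y)
      else 0)"

text \<open>Uncoupled generator on S^2 (off-diagonal entries; diagonal set to 0).\<close>
definition Gamma_unc :: "('a \<Rightarrow> 'a \<Rightarrow> real) \<Rightarrow> ('a \<Rightarrow> 'a \<Rightarrow> real) \<Rightarrow> 'a \<times> 'a \<Rightarrow> 'a \<times> 'a \<Rightarrow> real" where
  "Gamma_unc G1 G2 x y =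
     (if snd y = snd x \<and> fst y \<noteq> fst x then G1 (fst x) (fst y)
      else if fst y = fst x \<and> snd y \<noteq> snd x then G2 (snd x) (snd y)
      else 0)"

definition Mmap :: "('a \<times> 'a \<Rightarrow> real) \<Rightarrow> ('a \<times> 'a \<Rightarrow> real) \<Rightarrow> 'a \<times> 'a \<Rightarrow> real" where
  "Mmap m \<nu> x = rho m x * (\<nu> x + \<nu> (swp x))"

definition Jfun :: "('a::finite \<Rightarrow> 'a \<Rightarrow> real) \<Rightarrow> ('a \<Rightarrow> 'a \<Rightarrow> real) \<Rightarrow> ('a \<times> 'a \<Rightarrow> real)
    \<Rightarrow> ('a \<times> 'a \<Rightarrow> real) \<Rightarrow> real" where
  "Jfun G1 G2 m \<nu> =
     (let \<theta> = (\<lambda>x. \<nu> x / mubar m x); Gi = Gamma_inf G1 G2 m in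
       (\<Sum>x\<in>UNIV. qrate Gi x * \<theta> x * mubar m x)
       - (\<Sum>x\<in>UNIV. \<Sum>y\<in>UNIV - {x}. sqrt (\<theta> x) * sqrt (\<theta> y) * Gi x y * mubar m x))"

definition I1 :: "('a::finite \<Rightarrow> 'a \<Rightarrow> real) \<Rightarrow> ('a \<Rightarrow> 'a \<Rightarrow> real) \<Rightarrow> ('a \<Rightarrow> real) \<Rightarrow> ('a \<Rightarrow> real)
    \<Rightarrow> ('a \<times> 'a \<Rightarrow> real) \<Rightarrow> ereal" where
  "I1 G1 G2 m1 m2 \<gamma> =
     Inf ((\<lambda>\<nu>. ereal (Jfun G1 G2 (prodm m1 m2) \<nu>)) ` {\<nu>. pdist \<nu> \<and> Mmap (prodm m1 m2) \<nu> = \<gamma>})"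

definition I_inf :: "('a::finite \<Rightarrow> 'a \<Rightarrow> real) \<Rightarrow> ('a \<Rightarrow> 'a \<Rightarrow> real) \<Rightarrow> ('a \<Rightarrow> real) \<Rightarrow> ('a \<Rightarrow> real)
    \<Rightarrow> ('a \<times> 'a \<Rightarrow> real) \<Rightarrow> ereal" where
  "I_inf G1 G2 m1 m2 \<gamma> =
     (let m = prodm m1 m2; f = (\<lambda>x. \<gamma> x / m x); G = Gamma_unc G1 G2 in
      if (\<forall>x. f x = f (swp x)) then
        ereal ((\<Sum>x\<in>UNIV. (qrate G1 (fst x) + qrate G2 (snd x)) * \<gamma> x)
               - (\<Sum>x\<in>UNIV. \<Sum>y\<in>UNIV - {x}. sqrt (f x) * sqrt (f y) * G x y * m x))
      else \<infinity>)"

end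

theory Submission
  imports Defs
begin

text \<open>Since \<open>\<Gamma>\<^sup>\<infinity>(x,y) = \<rho>(x) \<Gamma>(x,y) + \<rho>(x') \<Gamma>(x',y')\<close> (\<open>x'\<close> the swapped pair) and
  \<open>\<rho>(x) \<mu>bar(x) = \<mu>(x)/2\<close>, the functional \<open>J(\<nu>)\<close> equals the linear term \<open>\<Sum> q \<gamma>\<close> of
  \<open>\<gamma> = M\<nu>\<close> minus the average of the uncoupled cross terms of \<open>\<theta>\<close> and \<open>\<theta> \<circ> swap\<close>.
  The constraint \<open>M\<nu> = \<gamma>\<close> forces \<open>f = \<gamma>/\<mu>\<close> to be symmetric with
  \<open>\<theta>(x) + \<theta>(x') = 2 f(x)\<close>, so Cauchy-Schwarz \<open>\<surd>a\<surd>b + \<surd>c\<surd>d \<le> \<surd>(a+c)\<surd>(b+d)\<close> bounds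
  \<open>J(\<nu>)\<close> below by \<open>I\<^sup>\<infinity>(\<gamma>)\<close>; equality holds for the symmetrization of \<open>\<gamma>\<close>, where \<open>\<theta> = f\<close>.\<close>

definition sqrt_form :: "('b::finite \<Rightarrow> 'b \<Rightarrow> real) \<Rightarrow> ('b \<Rightarrow> real) \<Rightarrow> ('b \<Rightarrow> real) \<Rightarrow> real" where
  "sqrt_form G m \<theta> = (\<Sum>x\<in>UNIV. \<Sum>y\<in>UNIV - {x}. sqrt (\<theta> x) * sqrt (\<theta> y) * G x y * m x)"

lemma swp_swp [simp]: "swp (swp x) = x"
  by (cases x) (simp add: swp_def)

lemma swp_eq_iff [simp]: "swp x = swp y \<longleftrightarrow> x = y"
  by (metis swp_swp)

lemma sum_swp: "(\<Sum>x\<in>UNIV. g (swp x)) = (\<Sum>x\<in>(UNIV::('a::finite \<times> 'a) set). g x)"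
  by (rule sum.reindex_bij_witness[where i=swp and j=swp]) auto

lemma sum_Diff_swp:
  "(\<Sum>y\<in>UNIV - {x}. g (swp y)) = (\<Sum>y\<in>(UNIV::('a::finite \<times> 'a) set) - {swp x}. g y)"
  by (rule sum.reindex_bij_witness[where i=swp and j=swp]) auto

lemma sum_sum_Diff_swp:
  "(\<Sum>x\<in>UNIV. \<Sum>y\<in>UNIV - {x}. h (swp x) (swp y))
     = (\<Sum>x\<in>(UNIV::('a::finite \<times> 'a) set). \<Sum>y\<in>UNIV - {x}. h x y)"
  using sum_swp[of "\<lambda>x. \<Sum>y\<in>UNIV - {x}. h x y"] by (simp add: sum_Diff_swp)

lemma sum_Diff_singleton_eq_if:
  "(\<Sum>a\<in>UNIV - {x}. g a) = (\<Sum>a\<in>(UNIV::'b::finite set). if a \<noteq> x then g a else 0)"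
proof -
  have "UNIV - {x} = {a. a \<noteq> x}" by auto
  then show ?thesis by (simp add: sum.If_cases)
qed

lemma Gamma_inf_eq_rho_Gamma_unc:
  "Gamma_inf G1 G2 m x y = rho m x * Gamma_unc G1 G2 x y + rho m (swp x) * Gamma_unc G1 G2 (swp x) (swp y)"
  unfolding Gamma_inf_def Gamma_unc_def swp_def by (cases x; cases y) auto

lemma Gamma_unc_nonneg:
  assumes "intensity_matrix G1" "intensity_matrix G2" "y \<noteq> x"
  shows "0 \<le> Gamma_unc G1 G2 x y"
  using assms unfolding Gamma_unc_def intensity_matrix_def by (cases x; cases y) auto

lemma qrate_Gamma_unc: "qrate (Gamma_unc G1 G2) x = qrate G1 (fst x) + qrate G2 (snd x)"
proof -
  obtain x1 x2 where x: "x = (x1, x2)" by (cases x)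
  define g1 where "g1 a = (if a \<noteq> x1 then G1 x1 a else 0)" for a
  define g2 where "g2 b = (if b \<noteq> x2 then G2 x2 b else 0)" for b
  have "qrate (Gamma_unc G1 G2) x = (\<Sum>y\<in>UNIV. Gamma_unc G1 G2 x y)"
    unfolding qrate_def sum_Diff_singleton_eq_if by (rule sum.cong) (auto simp: Gamma_unc_def)
  also have "\<dots> = (\<Sum>a\<in>UNIV. \<Sum>b\<in>UNIV. (if b = x2 then g1 a else 0) + (if a = x1 then g2 b else 0))"
    by (simp add: UNIV_Times_UNIV[symmetric] sum.cartesian_product del: UNIV_Times_UNIV)
       (rule sum.cong; auto simp: Gamma_unc_def x g1_def g2_def)
  also have "\<dots> = sum g1 UNIV + sum g2 UNIV"
    by (simp add: sum.distrib sum.swap[of _ UNIV UNIV])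
  finally show ?thesis
    unfolding qrate_def x g1_def g2_def by (simp add: sum_Diff_singleton_eq_if)
qed

lemma sqrt_mult_add_le:
  fixes a b c d :: real
  assumes "a \<ge> 0" "b \<ge> 0" "c \<ge> 0" "d \<ge> 0"
  shows "sqrt a * sqrt b + sqrt c * sqrt d \<le> sqrt (a + c) * sqrt (b + d)"
proof -
  have "0 \<le> (sqrt (a * d) - sqrt (b * c))\<^sup>2"
    by simp
  moreover have "(sqrt (a * d))\<^sup>2 = a * d" "(sqrt (b * c))\<^sup>2 = b * c"
    using assms by simp_all
  ultimately have "2 * (sqrt (a * d) * sqrt (b * c)) \<le> a * d + b * c"
    unfolding power2_diff by linarith
  then have "(sqrt a * sqrt b + sqrt c * sqrt d)\<^sup>2 \<le> (a + c) * (b + d)"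
    using assms by (simp add: power2_eq_square algebra_simps real_sqrt_mult)
  then show ?thesis
    by (simp add: real_le_rsqrt real_sqrt_mult[symmetric])
qed

lemma invariant_dist_pos:
  assumes "invariant_dist G m" "reversible G m" "irreducible_rates G"
  shows "m x > 0"
proof -
  have nonneg: "\<forall>x. m x \<ge> 0" and "sum m UNIV = 1"
    using assms(1) by (auto simp: invariant_dist_def pdist_def)
  then obtain x0 where x0: "m x0 > 0"
    by (metis less_eq_real_def sum.neutral zero_neq_one)
  have "(x0, x) \<in> {(a, b). a \<noteq> b \<and> G a b > 0}\<^sup>*"
    using assms(3) by (simp add: irreducible_rates_def)
  then show ?thesis
  proof (induction rule: rtrancl_induct)
    case (step a b)
    then have "m b * G b a > 0"
      using assms(2) unfolding reversible_def by (metis case_prodD mem_Collect_eq mult_pos_pos)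
    then show ?case
      using nonneg by (metis less_eq_real_def mult_eq_0_iff)
  qed (rule x0)
qed

context
  fixes m :: "'a::finite \<times> 'a \<Rightarrow> real"
  assumes m_pos: "\<forall>x. m x > 0"
begin

lemma add_swp_pos: "m x + m (swp x) > 0"
  using m_pos by (metis add_pos_pos)

lemma rho_mult_mubar:
  "rho m x * mubar m x = m x / 2"
  "rho m (swp x) * mubar m x = m (swp x) / 2"
  using add_swp_pos[of x] unfolding rho_def mubar_def by (simp_all add: add.commute)

lemma mubar_swp: "mubar m (swp x) = mubar m x"
  unfolding mubar_def by (simp add: add.commute)

lemma mubar_pos: "mubar m x > 0"
  using add_swp_pos[of x] unfolding mubar_def by simp

lemma Mmap_quotient:
  "Mmap m \<nu> x / m x = (\<nu> x + \<nu> (swp x)) / (m x + m (swp x))"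
  using m_pos[rule_format, of x] add_swp_pos[of x] by (simp add: Mmap_def rho_def)

lemma Mmap_quotient_swp: "Mmap m \<nu> (swp x) / m (swp x) = Mmap m \<nu> x / m x"
  by (simp add: Mmap_quotient add.commute)

lemma sum_qrate_Gamma_inf:
  "(\<Sum>x\<in>UNIV. qrate (Gamma_inf G1 G2 m) x * (\<nu> x / mubar m x) * mubar m x)
     = (\<Sum>x\<in>UNIV. qrate (Gamma_unc G1 G2) x * Mmap m \<nu> x)"
proof -
  define q where "q = qrate (Gamma_unc G1 G2)"
  have "qrate (Gamma_inf G1 G2 m) x = rho m x * q x + rho m (swp x) * q (swp x)" for x
    using sum_Diff_swp[of "Gamma_unc G1 G2 (swp x)" x]
    unfolding qrate_def q_def Gamma_inf_eq_rho_Gamma_unc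
    by (simp add: sum.distrib sum_distrib_left[symmetric])
  then have "(\<Sum>x\<in>UNIV. qrate (Gamma_inf G1 G2 m) x * (\<nu> x / mubar m x) * mubar m x)
      = (\<Sum>x\<in>UNIV. rho m x * q x * \<nu> x) + (\<Sum>x\<in>UNIV. rho m (swp x) * q (swp x) * \<nu> x)"
    using mubar_pos by (simp add: sum.distrib[symmetric] algebra_simps less_imp_neq[symmetric])
  also have "(\<Sum>x\<in>UNIV. rho m (swp x) * q (swp x) * \<nu> x) = (\<Sum>x\<in>UNIV. rho m x * q x * \<nu> (swp x))"
    using sum_swp[of "\<lambda>x. rho m x * q x * \<nu> (swp x)"] by simp
  finally show ?thesis
    unfolding q_def Mmap_def by (simp add: sum.distrib[symmetric] algebra_simps)
qed

lemma sqrt_form_Gamma_inf: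
  "sqrt_form (Gamma_inf G1 G2 m) (mubar m) \<theta>
     = (sqrt_form (Gamma_unc G1 G2) m \<theta> + sqrt_form (Gamma_unc G1 G2) m (\<theta> \<circ> swp)) / 2"
proof -
  define U where "U = Gamma_unc G1 G2"
  define t where "t x y = sqrt (\<theta> x) * sqrt (\<theta> y)" for x y
  have "t x y * Gamma_inf G1 G2 m x y * mubar m x
      = t x y * U x y * (rho m x * mubar m x) + t x y * U (swp x) (swp y) * (rho m (swp x) * mubar m x)"
    for x y
    unfolding Gamma_inf_eq_rho_Gamma_unc U_def by (simp add: algebra_simps)
  then have "t x y * Gamma_inf G1 G2 m x y * mubar m x
      = t x y * U x y * m x / 2 + t x y * U (swp x) (swp y) * m (swp x) / 2" for x y
    unfolding rho_mult_mubar by simp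
  then have "sqrt_form (Gamma_inf G1 G2 m) (mubar m) \<theta>
      = sqrt_form U m \<theta> / 2
        + (\<Sum>x\<in>UNIV. \<Sum>y\<in>UNIV - {x}. t (swp (swp x)) (swp (swp y)) * U (swp x) (swp y) * m (swp x) / 2)"
    unfolding sqrt_form_def t_def by (simp add: sum.distrib sum_divide_distrib)
  also have "(\<Sum>x\<in>UNIV. \<Sum>y\<in>UNIV - {x}. t (swp (swp x)) (swp (swp y)) * U (swp x) (swp y) * m (swp x) / 2)
      = sqrt_form U m (\<theta> \<circ> swp) / 2"
    using sum_sum_Diff_swp[of "\<lambda>x y. t (swp x) (swp y) * U x y * m x / 2"]
    unfolding sqrt_form_def t_def by (simp add: sum_divide_distrib)
  finally show ?thesis
    unfolding U_def by simp
qed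

lemma Jfun_eq_sqrt_form:
  "Jfun G1 G2 m \<nu> = (\<Sum>x\<in>UNIV. qrate (Gamma_unc G1 G2) x * Mmap m \<nu> x)
     - (sqrt_form (Gamma_unc G1 G2) m \<theta> + sqrt_form (Gamma_unc G1 G2) m (\<theta> \<circ> swp)) / 2"
  if "\<theta> = (\<lambda>x. \<nu> x / mubar m x)"
  using that sum_qrate_Gamma_inf sqrt_form_Gamma_inf
  unfolding Jfun_def Let_def sqrt_form_def[symmetric] by simp

lemma sqrt_form_swp_le:
  assumes U_nonneg: "\<And>x y. y \<noteq> x \<Longrightarrow> 0 \<le> U x y"
    and \<theta>_nonneg: "\<And>x. 0 \<le> \<theta> x"
    and \<theta>_add_swp: "\<And>x. \<theta> x + \<theta> (swp x) = 2 * f x"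
  shows "sqrt_form U m \<theta> + sqrt_form U m (\<theta> \<circ> swp) \<le> 2 * sqrt_form U m f"
proof -
  have pair_le: "sqrt (\<theta> x) * sqrt (\<theta> y) + sqrt (\<theta> (swp x)) * sqrt (\<theta> (swp y))
      \<le> 2 * (sqrt (f x) * sqrt (f y))" for x y
  proof -
    have "sqrt (\<theta> x) * sqrt (\<theta> y) + sqrt (\<theta> (swp x)) * sqrt (\<theta> (swp y))
        \<le> sqrt (2 * f x) * sqrt (2 * f y)"
      unfolding \<theta>_add_swp[symmetric] by (rule sqrt_mult_add_le) (simp_all add: \<theta>_nonneg)
    also have "\<dots> = 2 * (sqrt (f x) * sqrt (f y))"
      by (simp add: real_sqrt_mult)
    finally show ?thesis .
  qed
  have "sqrt (\<theta> x) * sqrt (\<theta> y) * U x y * m x + sqrt (\<theta> (swp x)) * sqrt (\<theta> (swp y)) * U x y * m x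
      \<le> 2 * (sqrt (f x) * sqrt (f y) * U x y * m x)" if "y \<noteq> x" for x y
  proof -
    have "0 \<le> U x y * m x"
      using U_nonneg[OF that] m_pos[rule_format, of x] by simp
    from mult_right_mono[OF pair_le this] show ?thesis
      by (simp add: algebra_simps)
  qed
  then show ?thesis
    unfolding sqrt_form_def sum_distrib_left sum.distrib[symmetric] comp_def
    by (intro sum_mono) auto
qed

end

lemma Jfun_ge_I_inf_value:
  assumes m_pos: "\<forall>x. m x > 0" and "intensity_matrix G1" "intensity_matrix G2"
    and \<nu>_nonneg: "\<forall>x. \<nu> x \<ge> 0"
  shows "(\<Sum>x\<in>UNIV. qrate (Gamma_unc G1 G2) x * Mmap m \<nu> x)
      - sqrt_form (Gamma_unc G1 G2) m (\<lambda>x. Mmap m \<nu> x / m x) \<le> Jfun G1 G2 m \<nu>"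
proof -
  define \<theta> where "\<theta> = (\<lambda>x. \<nu> x / mubar m x)"
  have \<theta>_add_swp: "\<theta> x + \<theta> (swp x) = 2 * (Mmap m \<nu> x / m x)" for x
    unfolding \<theta>_def Mmap_quotient[OF m_pos] mubar_swp[OF m_pos] mubar_def
    by (simp add: add_divide_distrib[symmetric] add.commute)
  have \<theta>_nonneg: "0 \<le> \<theta> x" for x
    unfolding \<theta>_def using \<nu>_nonneg[rule_format, of x] mubar_pos[OF m_pos, of x] by simp
  have U_nonneg: "y \<noteq> x \<Longrightarrow> 0 \<le> Gamma_unc G1 G2 x y" for x y
    using Gamma_unc_nonneg assms(2,3) .
  have "sqrt_form (Gamma_unc G1 G2) m \<theta> + sqrt_form (Gamma_unc G1 G2) m (\<theta> \<circ> swp)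
      \<le> 2 * sqrt_form (Gamma_unc G1 G2) m (\<lambda>x. Mmap m \<nu> x / m x)"
    using sqrt_form_swp_le[OF m_pos, where U="Gamma_unc G1 G2" and \<theta>=\<theta> and f="\<lambda>x. Mmap m \<nu> x / m x"]
      U_nonneg \<theta>_nonneg \<theta>_add_swp by blast
  then show ?thesis
    unfolding Jfun_eq_sqrt_form[OF m_pos \<theta>_def] by simp
qed

lemma symmetrization_attains_I_inf_value:
  assumes m_pos: "\<forall>x. m x > 0" and "pdist \<gamma>"
    and sym: "\<forall>x. \<gamma> x / m x = \<gamma> (swp x) / m (swp x)"
  defines "\<nu> \<equiv> \<lambda>x. (\<gamma> x + \<gamma> (swp x)) / 2"
  shows "pdist \<nu>" and "Mmap m \<nu> = \<gamma>"
    and "Jfun G1 G2 m \<nu> = (\<Sum>x\<in>UNIV. qrate (Gamma_unc G1 G2) x * \<gamma> x)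
      - sqrt_form (Gamma_unc G1 G2) m (\<lambda>x. \<gamma> x / m x)"
proof -
  have \<gamma>_add_swp: "\<gamma> x + \<gamma> (swp x) = \<gamma> x / m x * (m x + m (swp x))" for x
  proof -
    have "\<gamma> (swp x) = \<gamma> x / m x * m (swp x)"
      using sym[rule_format, of x] m_pos[rule_format, of "swp x"] by (simp add: field_simps)
    then show ?thesis
      using m_pos[rule_format, of x] by (simp add: distrib_left)
  qed
  show "pdist \<nu>"
    using assms(2) sum_swp[of \<gamma>] unfolding pdist_def \<nu>_def
    by (auto simp: sum.distrib sum_divide_distrib[symmetric] swp_def intro!: add_nonneg_nonneg)
  show M: "Mmap m \<nu> = \<gamma>"
  proof
    fix x
    show "Mmap m \<nu> x = \<gamma> x"
      using m_pos[rule_format, of x] add_swp_pos[OF m_pos, of x]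
      unfolding Mmap_def rho_def \<nu>_def swp_swp add_divide_distrib[symmetric] add.commute[of "\<gamma> (swp x)"]
      by (simp add: \<gamma>_add_swp)
  qed
  have \<theta>_eq: "\<nu> x / mubar m x = \<gamma> x / m x" for x
    using add_swp_pos[OF m_pos, of x] unfolding \<nu>_def mubar_def \<gamma>_add_swp by simp
  then have "(\<lambda>x. \<nu> x / mubar m x) \<circ> swp = (\<lambda>x. \<gamma> x / m x)"
    using sym by (auto simp: fun_eq_iff)
  then show "Jfun G1 G2 m \<nu> = (\<Sum>x\<in>UNIV. qrate (Gamma_unc G1 G2) x * \<gamma> x)
      - sqrt_form (Gamma_unc G1 G2) m (\<lambda>x. \<gamma> x / m x)"
    using Jfun_eq_sqrt_form[OF m_pos refl, of G1 G2 \<nu>] \<theta>_eq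
    unfolding M by simp
qed

theorem corollary3p3:
  fixes G1 G2 :: "'a::finite \<Rightarrow> 'a \<Rightarrow> real"
    and m1 m2 :: "'a \<Rightarrow> real"
    and \<gamma> :: "'a \<times> 'a \<Rightarrow> real"
  assumes "intensity_matrix G1" and "irreducible_rates G1"
    and "invariant_dist G1 m1" and "\<forall>m. invariant_dist G1 m \<longrightarrow> m = m1"
    and "reversible G1 m1"
    and "intensity_matrix G2" and "irreducible_rates G2"
    and "invariant_dist G2 m2" and "\<forall>m. invariant_dist G2 m \<longrightarrow> m = m2"
    and "reversible G2 m2"
    and "pdist \<gamma>"
  shows "I1 G1 G2 m1 m2 \<gamma> = I_inf G1 G2 m1 m2 \<gamma>"
proof -
  define m where "m = prodm m1 m2"
  define U where "U = Gamma_unc G1 G2"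
  define R where "R = (\<Sum>x\<in>UNIV. qrate U x * \<gamma> x) - sqrt_form U m (\<lambda>x. \<gamma> x / m x)"
  define feasible where "feasible = {\<nu>. pdist \<nu> \<and> Mmap m \<nu> = \<gamma>}"
  have m_pos: "\<forall>x. m x > 0"
    using invariant_dist_pos[OF assms(3,5,2)] invariant_dist_pos[OF assms(8,10,7)]
    by (simp add: m_def prodm_def split_beta)
  have I1_eq: "I1 G1 G2 m1 m2 \<gamma> = (INF \<nu>\<in>feasible. ereal (Jfun G1 G2 m \<nu>))"
    unfolding I1_def m_def feasible_def ..
  show ?thesis
  proof (cases "\<forall>x. \<gamma> x / m x = \<gamma> (swp x) / m (swp x)")
    case True
    have "I1 G1 G2 m1 m2 \<gamma> \<le> ereal R"
      unfolding I1_eq R_def U_def feasible_def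
      using symmetrization_attains_I_inf_value[OF m_pos assms(11) True]
      by (intro INF_lower2[of "\<lambda>x. (\<gamma> x + \<gamma> (swp x)) / 2"]) auto
    moreover have "ereal R \<le> I1 G1 G2 m1 m2 \<gamma>"
      unfolding I1_eq R_def U_def feasible_def
      using Jfun_ge_I_inf_value[OF m_pos assms(1,6)] by (intro INF_greatest) (auto simp: pdist_def)
    moreover have "I_inf G1 G2 m1 m2 \<gamma> = ereal R"
      using True unfolding I_inf_def Let_def R_def U_def m_def sqrt_form_def by (simp add: qrate_Gamma_unc)
    ultimately show ?thesis
      by simp
  next
    case False
    then have "feasible = {}"
      unfolding feasible_def using Mmap_quotient_swp[OF m_pos] by force
    then show ?thesis
      using False unfolding I1_eq I_inf_def Let_def m_def by (simp add: top_ereal_def)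
  qed
qed

end
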